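(* Let $q\in\,]0,1[$, $\omega\ge 0$, and let $I$ be an interval containing $\omega_0:=\omega/(1-q)$. Let $\alpha,\beta\in\mathbb{R}$ and let $f,g:I\to\mathbb{R}$ be Hahn symmetric differentiable on $I$. Then for every $t\in I^{q,\omega}$: 1. $\tilde D_{q,\omega}[\alpha f+\beta g](t)=\alpha\tilde D_{q,\omega}[f](t)+\beta\tilde D_{q,\omega}[g](t)$; 2. $\tilde D_{q,\omega}[fg](t)=\tilde D_{q,\omega}[f](t)\,g(\sigma(t))+f(\sigma^{-1}(t))\,\tilde D_{q,\omega}[g](t)$; 3. if $g(\sigma(t))\,g(\sigma^{-1}(t))\neq 0$, then $\tilde D_{q,\omega}[f/g](t)=\dfrac{\tilde D_{q,\omega}[f](t)\,g(\sigma^{-1}(t))-f(\sigma^{-1}(t))\,\tilde D_{q,\omega}[g](t)}{g(\sigma(t))\,g(\sigma^{-1}(t))}$; 4. $\tilde D_{q,\omega}[f]\equiv 0$ (on $I^{q,\omega}$) if and only if $f$ is constant on $I$.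
   Context: $\sigma(t):=qt+\omega$, $\sigma^{-1}(t):=q^{-1}(t-\omega)$, and $I^{q,\omega}:=\{qt+\omega:t\in I\}\subseteq I$. The Hahn symmetric derivative of $f:I\to\mathbb{R}$ is defined, for $t\in I^{q,\omega}\setminus\{\omega_0\}$, by $$\tilde D_{q,\omega}[f](t):=\frac{f(qt+\omega)-f(q^{-1}(t-\omega))}{(q-q^{-1})t+(1+q^{-1})\omega}=\frac{f(\sigma(t))-f(\sigma^{-1}(t))}{\sigma(t)-\sigma^{-1}(t)},$$ and $\tilde D_{q,\omega}[f](\omega_0):=f'(\omega_0)$ (classical derivative), provided $f$ is differentiable at $\omega_0$ in the classical sense. "Hahn symmetric differentiable on $I$" means that $\tilde D_{q,\omega}[f](t)$ is defined for all $t\in I^{q,\omega}$, i.e. in particular $f$ is classically differentiable at $\omega_0$. *)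

theory Defs
  imports "HOL-Analysis.Analysis"
begin

definition hsigma :: "real \<Rightarrow> real \<Rightarrow> real \<Rightarrow> real" where
  "hsigma q \<omega> t = q * t + \<omega>"

definition hsigma_inv :: "real \<Rightarrow> real \<Rightarrow> real \<Rightarrow> real" where
  "hsigma_inv q \<omega> t = (t - \<omega>) / q"

definition omega0 :: "real \<Rightarrow> real \<Rightarrow> real" where
  "omega0 q \<omega> = \<omega> / (1 - q)"

definition qw_set :: "real \<Rightarrow> real \<Rightarrow> real set \<Rightarrow> real set" where
  "qw_set q \<omega> I = (\<lambda>t. q * t + \<omega>) ` I"

text \<open>Hahn symmetric derivative of f on I; at omega0 the classical derivative
  (taken within I, since f is only defined on I).\<close>
definition hahn_sym_deriv ::
  "real \<Rightarrow> real \<Rightarrow> real set \<Rightarrow> (real \<Rightarrow> real) \<Rightarrow> real \<Rightarrow> real" where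
  "hahn_sym_deriv q \<omega> I f t =
     (if t = omega0 q \<omega> then vector_derivative f (at t within I)
      else (f (hsigma q \<omega> t) - f (hsigma_inv q \<omega> t)) /
           ((q - 1 / q) * t + (1 + 1 / q) * \<omega>))"

text \<open>Hahn symmetric differentiable on I: the derivative is defined at every point of
  I^{q,omega}; away from omega0 the quotient is always defined, so this amounts to
  classical differentiability of f at omega0 (relative to I).\<close>
definition hahn_sym_differentiable_on ::
  "real \<Rightarrow> real \<Rightarrow> real set \<Rightarrow> (real \<Rightarrow> real) \<Rightarrow> bool" where
  "hahn_sym_differentiable_on q \<omega> I f \<longleftrightarrow> f differentiable (at (omega0 q \<omega>) within I)"

end

theory Submission
  imports Defs
begin

text \<open>Away from the fixed point \<open>\<omega>\<^sub>0\<close> of \<open>\<sigma>\<close>, the Hahn symmetric derivative is the difference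
  quotient of \<open>f\<close> over the pair \<open>\<sigma>(t), \<sigma>\<^sup>-\<^sup>1(t)\<close>, so the linearity, product and quotient rules are
  field identities; at \<open>\<omega>\<^sub>0\<close> they are the classical rules, because \<open>\<sigma>(\<omega>\<^sub>0) = \<sigma>\<^sup>-\<^sup>1(\<omega>\<^sub>0) = \<omega>\<^sub>0\<close>.
  For the last claim, a vanishing derivative gives \<open>f(\<sigma>(\<sigma>(x))) = f(x)\<close>; since \<open>\<sigma>\<close> contracts
  towards \<open>\<omega>\<^sub>0\<close>, iterating and using continuity of \<open>f\<close> at \<open>\<omega>\<^sub>0\<close> shows \<open>f(x) = f(\<omega>\<^sub>0)\<close>.\<close>

lemma omega_eq_omega0: "q \<noteq> 1 \<Longrightarrow> \<omega> = (1 - q) * omega0 q \<omega>"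
  by (simp add: omega0_def)

lemma hsigma_eq:
  assumes "q \<noteq> 1"
  shows "hsigma q \<omega> t = omega0 q \<omega> + q * (t - omega0 q \<omega>)"
  by (subst omega_eq_omega0[OF assms]) (simp add: hsigma_def algebra_simps)

lemma hsigma_inv_eq:
  assumes "q \<noteq> 0" "q \<noteq> 1"
  shows "hsigma_inv q \<omega> t = omega0 q \<omega> + (t - omega0 q \<omega>) / q"
  using assms
  by (subst omega_eq_omega0[OF assms(2)]) (simp add: hsigma_inv_def field_simps)

lemma hsigma_omega0 [simp]: "q \<noteq> 1 \<Longrightarrow> hsigma q \<omega> (omega0 q \<omega>) = omega0 q \<omega>"
  by (simp add: hsigma_eq)

lemma hsigma_inv_omega0 [simp]: "q \<noteq> 0 \<Longrightarrow> q \<noteq> 1 \<Longrightarrow> hsigma_inv q \<omega> (omega0 q \<omega>) = omega0 q \<omega>"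
  by (simp add: hsigma_inv_eq)

lemma hsigma_inv_hsigma [simp]: "q \<noteq> 0 \<Longrightarrow> hsigma_inv q \<omega> (hsigma q \<omega> t) = t"
  by (simp add: hsigma_def hsigma_inv_def)

lemma hsigma_eq_hsigma_inv_iff:
  assumes "0 < q" "q \<noteq> 1"
  shows "hsigma q \<omega> t = hsigma_inv q \<omega> t \<longleftrightarrow> t = omega0 q \<omega>"
proof -
  have "q * q \<noteq> 1"
    using assms by (metis mult_cancel_right1 mult_le_cancel_left1 mult_less_cancel_left1
        not_less_iff_gr_or_eq)
  moreover have "hsigma q \<omega> t = hsigma_inv q \<omega> t \<longleftrightarrow> (q * q - 1) * (t - omega0 q \<omega>) = 0"
    using assms by (auto simp: hsigma_eq hsigma_inv_eq field_simps)
  ultimately show ?thesis by simp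
qed

lemma qw_set_eq_image_hsigma: "qw_set q \<omega> I = hsigma q \<omega> ` I"
  by (simp add: qw_set_def hsigma_def)

lemma hsigma_in_interval:
  assumes "0 \<le> q" "q < 1" "is_interval I" "omega0 q \<omega> \<in> I" "x \<in> I"
  shows "hsigma q \<omega> x \<in> I"
proof -
  have "(1 - q) *\<^sub>R omega0 q \<omega> + q *\<^sub>R x \<in> I"
    using assms by (intro convexD) (auto simp: is_interval_convex_1)
  then show ?thesis
    using assms(2) by (simp add: hsigma_eq algebra_simps)
qed

lemma at_within_interval_nontrivial:
  fixes I :: "real set"
  assumes "is_interval I" "x \<in> I" "y \<in> I" "y \<noteq> x"
  shows "at x within I \<noteq> bot"
  using assms connected_imp_perfect[of I x] is_interval_connected trivial_limit_within by blast

lemma hahn_sym_deriv_eq_diff_quotient: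
  assumes "t \<noteq> omega0 q \<omega>"
  shows "hahn_sym_deriv q \<omega> I f t =
    (f (hsigma q \<omega> t) - f (hsigma_inv q \<omega> t)) / (hsigma q \<omega> t - hsigma_inv q \<omega> t)"
  using assms by (simp add: hahn_sym_deriv_def hsigma_def hsigma_inv_def diff_divide_distrib
      algebra_simps)

lemma hahn_sym_deriv_omega0:
  assumes "at (omega0 q \<omega>) within I \<noteq> bot"
    and "(f has_real_derivative D) (at (omega0 q \<omega>) within I)"
  shows "hahn_sym_deriv q \<omega> I f (omega0 q \<omega>) = D"
  using assms vector_derivative_within has_real_derivative_iff_has_vector_derivative
  by (simp add: hahn_sym_deriv_def)

lemma hahn_sym_differentiable_on_has_derivative:
  assumes "at (omega0 q \<omega>) within I \<noteq> bot" "hahn_sym_differentiable_on q \<omega> I f"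
  shows "(f has_real_derivative hahn_sym_deriv q \<omega> I f (omega0 q \<omega>)) (at (omega0 q \<omega>) within I)"
proof -
  obtain D where "(f has_real_derivative D) (at (omega0 q \<omega>) within I)"
    using assms(2) by (auto simp: hahn_sym_differentiable_on_def real_differentiable_def)
  with hahn_sym_deriv_omega0[OF assms(1)] show ?thesis by simp
qed

lemma diff_quotient_mult:
  fixes a b c d h :: real
  shows "(a * b - c * d) / h = (a - c) / h * b + c * ((b - d) / h)"
  by (cases "h = 0") (simp_all add: field_simps)

lemma diff_quotient_divide:
  fixes a b c d h :: real
  assumes "b \<noteq> 0" "d \<noteq> 0"
  shows "(a / b - c / d) / h = ((a - c) / h * d - c * ((b - d) / h)) / (b * d)"
  using assms by (cases "h = 0") (simp_all add: field_simps)

lemma hahn_sym_deriv_linear: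
  assumes I: "at (omega0 q \<omega>) within I \<noteq> bot"
    and f: "hahn_sym_differentiable_on q \<omega> I f" and g: "hahn_sym_differentiable_on q \<omega> I g"
  shows "hahn_sym_deriv q \<omega> I (\<lambda>x. \<alpha> * f x + \<beta> * g x) t
    = \<alpha> * hahn_sym_deriv q \<omega> I f t + \<beta> * hahn_sym_deriv q \<omega> I g t"
proof (cases "t = omega0 q \<omega>")
  case True
  note Df = hahn_sym_differentiable_on_has_derivative[OF I f]
    and Dg = hahn_sym_differentiable_on_has_derivative[OF I g]
  have "((\<lambda>x. \<alpha> * f x + \<beta> * g x) has_real_derivative
      \<alpha> * hahn_sym_deriv q \<omega> I f t + \<beta> * hahn_sym_deriv q \<omega> I g t) (at (omega0 q \<omega>) within I)"
    unfolding True by (auto intro!: derivative_eq_intros Df Dg)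
  then show ?thesis
    using hahn_sym_deriv_omega0[OF I] True by blast
next
  case False
  then show ?thesis
    by (simp add: hahn_sym_deriv_eq_diff_quotient diff_divide_distrib add_divide_distrib
        algebra_simps)
qed

lemma hahn_sym_deriv_mult:
  assumes q: "q \<noteq> 0" "q \<noteq> 1" and I: "at (omega0 q \<omega>) within I \<noteq> bot"
    and f: "hahn_sym_differentiable_on q \<omega> I f" and g: "hahn_sym_differentiable_on q \<omega> I g"
  shows "hahn_sym_deriv q \<omega> I (\<lambda>x. f x * g x) t
    = hahn_sym_deriv q \<omega> I f t * g (hsigma q \<omega> t)
      + f (hsigma_inv q \<omega> t) * hahn_sym_deriv q \<omega> I g t"
proof (cases "t = omega0 q \<omega>")
  case True
  note Df = hahn_sym_differentiable_on_has_derivative[OF I f]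
    and Dg = hahn_sym_differentiable_on_has_derivative[OF I g]
  have "((\<lambda>x. f x * g x) has_real_derivative
      hahn_sym_deriv q \<omega> I f t * g t + f t * hahn_sym_deriv q \<omega> I g t) (at (omega0 q \<omega>) within I)"
    unfolding True by (auto intro!: derivative_eq_intros Df Dg)
  then show ?thesis
    using hahn_sym_deriv_omega0[OF I] True q by simp
next
  case False
  then show ?thesis
    by (simp add: hahn_sym_deriv_eq_diff_quotient diff_quotient_mult)
qed

lemma hahn_sym_deriv_divide:
  assumes q: "q \<noteq> 0" "q \<noteq> 1" and I: "at (omega0 q \<omega>) within I \<noteq> bot"
    and f: "hahn_sym_differentiable_on q \<omega> I f" and g: "hahn_sym_differentiable_on q \<omega> I g"
    and nz: "g (hsigma q \<omega> t) * g (hsigma_inv q \<omega> t) \<noteq> 0"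
  shows "hahn_sym_deriv q \<omega> I (\<lambda>x. f x / g x) t
    = (hahn_sym_deriv q \<omega> I f t * g (hsigma_inv q \<omega> t)
       - f (hsigma_inv q \<omega> t) * hahn_sym_deriv q \<omega> I g t)
      / (g (hsigma q \<omega> t) * g (hsigma_inv q \<omega> t))"
proof (cases "t = omega0 q \<omega>")
  case True
  with nz q have "g t \<noteq> 0" by simp
  then have "((\<lambda>x. f x / g x) has_real_derivative
      (hahn_sym_deriv q \<omega> I f t * g t - f t * hahn_sym_deriv q \<omega> I g t) / (g t * g t))
      (at (omega0 q \<omega>) within I)"
    unfolding True
    by (intro DERIV_divide hahn_sym_differentiable_on_has_derivative[OF I f]
        hahn_sym_differentiable_on_has_derivative[OF I g])
  then show ?thesis
    using hahn_sym_deriv_omega0[OF I] True q by simp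
next
  case False
  with nz show ?thesis
    by (simp add: hahn_sym_deriv_eq_diff_quotient diff_quotient_divide)
qed

lemma funpow_contraction_towards:
  fixes c r :: "'a::comm_ring_1"
  shows "((\<lambda>x. c + r * (x - c)) ^^ n) x = c + r ^ n * (x - c)"
proof (induction n)
  case (Suc n)
  then show ?case
    by (simp only: funpow.simps comp_apply) (simp add: algebra_simps)
qed simp

lemma LIMSEQ_funpow_contraction_towards:
  fixes c r x :: real
  assumes "\<bar>r\<bar> < 1"
  shows "(\<lambda>n. ((\<lambda>x. c + r * (x - c)) ^^ n) x) \<longlonglongrightarrow> c"
proof -
  have "(\<lambda>n. c + r ^ n * (x - c)) \<longlonglongrightarrow> c + 0 * (x - c)"
    using assms by (intro tendsto_intros LIMSEQ_power_zero) simp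
  then show ?thesis
    by (simp add: funpow_contraction_towards)
qed

lemma eq_at_limit_of_iterates:
  fixes f :: "'a::{first_countable_topology, t2_space} \<Rightarrow> 'b::t2_space"
  assumes cont: "continuous (at c within I) f"
    and maps: "\<And>x. x \<in> I \<Longrightarrow> \<phi> x \<in> I"
    and inv: "\<And>x. x \<in> I \<Longrightarrow> f (\<phi> x) = f x"
    and x: "x \<in> I" and lim: "(\<lambda>n. (\<phi> ^^ n) x) \<longlonglongrightarrow> c"
  shows "f x = f c"
proof -
  have iter: "(\<phi> ^^ n) x \<in> I \<and> f ((\<phi> ^^ n) x) = f x" for n
    by (induction n) (simp_all add: x maps inv)
  then have "(f \<circ> (\<lambda>n. (\<phi> ^^ n) x)) \<longlonglongrightarrow> f c"
    using cont lim by (auto simp: continuous_within_sequentially)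
  moreover have "f \<circ> (\<lambda>n. (\<phi> ^^ n) x) = (\<lambda>n. f x)"
    using iter by auto
  ultimately show ?thesis
    using LIMSEQ_unique tendsto_const by metis
qed

lemma constant_if_hahn_sym_deriv_zero:
  assumes q: "0 < q" "q < 1" and I: "is_interval I" "omega0 q \<omega> \<in> I"
    and f: "hahn_sym_differentiable_on q \<omega> I f"
    and zero: "\<forall>t\<in>qw_set q \<omega> I. hahn_sym_deriv q \<omega> I f t = 0"
    and x: "x \<in> I"
  shows "f x = f (omega0 q \<omega>)"
proof (rule eq_at_limit_of_iterates[OF _ _ _ x])
  define c where "c = omega0 q \<omega>"
  have \<sigma>\<sigma>: "hsigma q \<omega> (hsigma q \<omega> y) = c + q\<^sup>2 * (y - c)" for y
    using q by (simp add: hsigma_eq c_def power2_eq_square)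
  show "continuous (at (omega0 q \<omega>) within I) f"
    using f by (simp add: hahn_sym_differentiable_on_def differentiable_imp_continuous_within)
  show "(\<lambda>y. c + q\<^sup>2 * (y - c)) y \<in> I" if "y \<in> I" for y
    using hsigma_in_interval q I that by (simp flip: \<sigma>\<sigma>)
  show "f ((\<lambda>y. c + q\<^sup>2 * (y - c)) y) = f y" if y: "y \<in> I" for y
  proof (cases "y = c")
    case False
    let ?t = "hsigma q \<omega> y"
    have "?t \<in> qw_set q \<omega> I" "?t \<noteq> c"
      using y False q by (auto simp: qw_set_eq_image_hsigma hsigma_eq c_def)
    then have "f (hsigma q \<omega> ?t) = f (hsigma_inv q \<omega> ?t)"
      using zero hahn_sym_deriv_eq_diff_quotient[of ?t q \<omega> I f]
        hsigma_eq_hsigma_inv_iff[of q \<omega> ?t] q by (auto simp: c_def)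
    then show ?thesis
      using q by (simp flip: \<sigma>\<sigma>)
  qed simp
  show "(\<lambda>n. ((\<lambda>y. c + q\<^sup>2 * (y - c)) ^^ n) x) \<longlonglongrightarrow> omega0 q \<omega>"
    using q by (auto simp: c_def power_less_one_iff intro!: LIMSEQ_funpow_contraction_towards)
qed

lemma hahn_sym_deriv_zero_if_constant:
  assumes q: "0 < q" "q < 1" and I: "is_interval I" "omega0 q \<omega> \<in> I"
    and nontriv: "at (omega0 q \<omega>) within I \<noteq> bot"
    and const: "\<forall>x\<in>I. f x = c" and t: "t \<in> qw_set q \<omega> I"
  shows "hahn_sym_deriv q \<omega> I f t = 0"
proof (cases "t = omega0 q \<omega>")
  case True
  have "((\<lambda>x. c) has_real_derivative 0) (at (omega0 q \<omega>) within I)"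
    by simp
  then have "(f has_real_derivative 0) (at (omega0 q \<omega>) within I)"
    by (rule has_field_derivative_transform_within[where d = 1]) (use const I in auto)
  then show ?thesis
    using hahn_sym_deriv_omega0[OF nontriv] True by blast
next
  case False
  obtain s where s: "s \<in> I" "t = hsigma q \<omega> s"
    using t by (auto simp: qw_set_eq_image_hsigma)
  then have "hsigma q \<omega> t \<in> I"
    using q I by (simp add: hsigma_in_interval)
  with s False q const show ?thesis
    by (simp add: hahn_sym_deriv_eq_diff_quotient)
qed

theorem theorem2p8:
  fixes q \<omega> \<alpha> \<beta> :: real and I :: "real set" and f g :: "real \<Rightarrow> real"
  assumes q: "0 < q" "q < 1"
    and w: "\<omega> \<ge> 0"
    and I: "is_interval I" "omega0 q \<omega> \<in> I" "\<exists>x\<in>I. x \<noteq> omega0 q \<omega>"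
    and f: "hahn_sym_differentiable_on q \<omega> I f"
    and g: "hahn_sym_differentiable_on q \<omega> I g"
  shows "(\<forall>t\<in>qw_set q \<omega> I.
            hahn_sym_deriv q \<omega> I (\<lambda>x. \<alpha> * f x + \<beta> * g x) t
              = \<alpha> * hahn_sym_deriv q \<omega> I f t + \<beta> * hahn_sym_deriv q \<omega> I g t)
       \<and> (\<forall>t\<in>qw_set q \<omega> I.
            hahn_sym_deriv q \<omega> I (\<lambda>x. f x * g x) t
              = hahn_sym_deriv q \<omega> I f t * g (hsigma q \<omega> t)
                + f (hsigma_inv q \<omega> t) * hahn_sym_deriv q \<omega> I g t)
       \<and> (\<forall>t\<in>qw_set q \<omega> I.
            g (hsigma q \<omega> t) * g (hsigma_inv q \<omega> t) \<noteq> 0 \<longrightarrow>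
            hahn_sym_deriv q \<omega> I (\<lambda>x. f x / g x) t
              = (hahn_sym_deriv q \<omega> I f t * g (hsigma_inv q \<omega> t)
                 - f (hsigma_inv q \<omega> t) * hahn_sym_deriv q \<omega> I g t)
                / (g (hsigma q \<omega> t) * g (hsigma_inv q \<omega> t)))
       \<and> ((\<forall>t\<in>qw_set q \<omega> I. hahn_sym_deriv q \<omega> I f t = 0) \<longleftrightarrow> (\<exists>c. \<forall>x\<in>I. f x = c))"
proof -
  have q': "q \<noteq> 0" "q \<noteq> 1"
    using q by auto
  have nontriv: "at (omega0 q \<omega>) within I \<noteq> bot"
    using I at_within_interval_nontrivial by blast
  have "(\<forall>t\<in>qw_set q \<omega> I. hahn_sym_deriv q \<omega> I f t = 0) \<longleftrightarrow> (\<exists>c. \<forall>x\<in>I. f x = c)"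
    using constant_if_hahn_sym_deriv_zero[OF q I(1,2) f]
      hahn_sym_deriv_zero_if_constant[OF q I(1,2) nontriv] by blast
  then show ?thesis
    using hahn_sym_deriv_linear[OF nontriv f g] hahn_sym_deriv_mult[OF q' nontriv f g]
      hahn_sym_deriv_divide[OF q' nontriv f g] by blast
qed

end
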